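(* Let $\tau_a$ and $\tau_b$ be the endomorphisms of $\{a,b\}^*$ defined by $\tau_a(a)=a$, $\tau_a(b)=ab$ and $\tau_b(a)=ba$, $\tau_b(b)=b$. If $\mathbf{w}$ is an infinite LSP word over $\{a,b\}$ and $f\in\{\tau_a,\tau_b\}$, then $f(\mathbf{w})$ is LSP. Consequently, an infinite word over $\{a,b\}$ is LSP if and only if it is $\{\tau_a,\tau_b\}$-adic.
   Context: A finite word $u$ is a left special factor of a word $w$ if there are distinct letters $x\neq y$ with $xu$ and $yu$ factors of $w$. A word is LSP if every left special factor of it is a prefix of it. For a set $S$ of morphisms, an infinite word $\mathbf{w}$ is $S$-adic if there exist $(f_n)_{n\ge1}$ in $S$ and infinite words $(\mathbf{w}_n)_{n\ge1}$ with $\mathbf{w}_1=\mathbf{w}$ and $\mathbf{w}_n=f_n(\mathbf{w}_{n+1})$ for all $n\ge1$. *)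

theory Defs
  imports Main
begin

datatype ab = A | B

type_synonym 'a infword = "nat \<Rightarrow> 'a"

definition morph_list :: "('a \<Rightarrow> 'b list) \<Rightarrow> 'a list \<Rightarrow> 'b list" where
  "morph_list f u = concat (map f u)"

text \<open>This is the correct image whenever f is non-erasing (all images nonempty),
 which is the case for the morphisms considered here.\<close>
definition morph_inf :: "('a \<Rightarrow> 'b list) \<Rightarrow> 'a infword \<Rightarrow> 'b infword" where
  "morph_inf f w k = morph_list f (map w [0..<Suc k]) ! k"

definition factor :: "'a list \<Rightarrow> 'a infword \<Rightarrow> bool" where
  "factor u w \<longleftrightarrow> (\<exists>i. u = map w [i..<i + length u])"

definition prefix_inf :: "'a list \<Rightarrow> 'a infword \<Rightarrow> bool" where
  "prefix_inf u w \<longleftrightarrow> u = map w [0..<length u]"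

definition left_special :: "'a list \<Rightarrow> 'a infword \<Rightarrow> bool" where
  "left_special u w \<longleftrightarrow> (\<exists>x y. x \<noteq> y \<and> factor (x # u) w \<and> factor (y # u) w)"

definition LSP :: "'a infword \<Rightarrow> bool" where
  "LSP w \<longleftrightarrow> (\<forall>u. left_special u w \<longrightarrow> prefix_inf u w)"

definition S_adic :: "('a \<Rightarrow> 'a list) set \<Rightarrow> 'a infword \<Rightarrow> bool" where
  "S_adic S w \<longleftrightarrow> (\<exists>(fs :: nat \<Rightarrow> ('a \<Rightarrow> 'a list)) (ws :: nat \<Rightarrow> 'a infword).
      (\<forall>n\<ge>1. fs n \<in> S) \<and> ws 1 = w \<and> (\<forall>n\<ge>1. ws n = morph_inf (fs n) (ws (Suc n))))"

definition tau_a :: "ab \<Rightarrow> ab list" where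
  "tau_a c = (case c of A \<Rightarrow> [A] | B \<Rightarrow> [A, B])"

definition tau_b :: "ab \<Rightarrow> ab list" where
  "tau_b c = (case c of A \<Rightarrow> [B, A] | B \<Rightarrow> [B])"

end

theory Submission
  imports Defs "HOL-Library.Omega_Words_Fun"
begin

text \<open>In \<open>\<tau>\<^sub>a(w)\<close> every \<open>B\<close> is followed by \<open>A\<close>, so a nonempty left special factor \<open>u\<close>
 of \<open>\<tau>\<^sub>a(w)\<close> starts with \<open>A\<close>. Splitting off a trailing \<open>A\<close>, \<open>u = \<tau>\<^sub>a(v)\<close> or
 \<open>u = \<tau>\<^sub>a(v)A\<close>, and the occurrences of \<open>Au\<close> and \<open>Bu\<close> come from occurrences of \<open>Av\<close> and
 \<open>Bv\<close> in \<open>w\<close>: thus \<open>v\<close> is a shorter left special factor of \<open>w\<close>, and \<open>u\<close> is a prefix of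
 \<open>\<tau>\<^sub>a(w)\<close> as soon as \<open>v\<close> is a prefix of \<open>w\<close>. This descent shows that \<open>\<tau>\<^sub>a\<close>, and its
 conjugate \<open>\<tau>\<^sub>b\<close> under the exchange of letters, preserve LSP; iterated along a directive
 sequence, by induction on \<open>|u|\<close>, it shows that \<open>{\<tau>\<^sub>a, \<tau>\<^sub>b}\<close>-adic words are LSP.

 Conversely, an LSP word starting with \<open>A\<close> has no factor \<open>BB\<close> (otherwise \<open>B\<close> would be a left
 special factor that is not a prefix), so it is \<open>\<tau>\<^sub>a(W)\<close> for some \<open>W\<close>; and \<open>W\<close> is LSP, because
 a left special factor \<open>v\<close> of \<open>W\<close> gives the left special factor \<open>\<tau>\<^sub>a(v)A\<close> of \<open>\<tau>\<^sub>a(W)\<close>.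
 Desubstituting forever yields a directive sequence.\<close>

section \<open>Prefixes and factors of infinite words\<close>

lemma prefix_inf_iff_conc: "prefix_inf u w \<longleftrightarrow> w = u \<frown> suffix (length u) w"
proof
  assume "prefix_inf u w"
  then have "u = prefix (length u) w" by (simp add: prefix_inf_def subsequence_def)
  then show "w = u \<frown> suffix (length u) w" by (metis prefix_suffix)
next
  assume "w = u \<frown> suffix (length u) w"
  then have "prefix (length u) w = u" by (metis prefix_conc_length)
  then show "prefix_inf u w" by (simp add: prefix_inf_def subsequence_def)
qed

lemma prefix_inf_conc: "prefix_inf u (u \<frown> w)"
  by (simp add: prefix_inf_def subsequence_def[symmetric])

lemma prefix_inf_nth: "prefix_inf u w \<longleftrightarrow> (\<forall>k<length u. u ! k = w k)"
  unfolding prefix_inf_def list_eq_iff_nth_eq by auto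

lemma prefix_inf_Nil [simp]: "prefix_inf [] w"
  by (simp add: prefix_inf_def)

lemma prefix_inf_append:
  "prefix_inf (u @ v) w \<longleftrightarrow> prefix_inf u w \<and> prefix_inf v (suffix (length u) w)"
  unfolding prefix_inf_def
  by (simp add: subsequence_def[symmetric] subsequence_append[where i="length u" and j="length v"])

lemma prefix_inf_Cons: "prefix_inf (c # v) w \<longleftrightarrow> w 0 = c \<and> prefix_inf v (suffix 1 w)"
  using prefix_inf_append[of "[c]" v w] by (auto simp: prefix_inf_def)

lemma prefix_inf_append_conc_iff [simp]: "prefix_inf (u @ v) (u \<frown> w) \<longleftrightarrow> prefix_inf v w"
  by (simp add: prefix_inf_append prefix_inf_conc)

lemma prefix_inf_Cons_build [simp]: "prefix_inf (c # v) (a ## w) \<longleftrightarrow> c = a \<and> prefix_inf v w"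
proof -
  have "suffix 1 (a ## w) = w" by (rule ext) simp
  then show ?thesis by (auto simp: prefix_inf_Cons)
qed

lemma factor_iff_prefix_inf_suffix: "factor u w \<longleftrightarrow> (\<exists>i. prefix_inf u (suffix i w))"
  unfolding factor_def prefix_inf_def by (simp add: subsequence_def[symmetric])

lemma factor_Cons: "factor (c # u) w \<longleftrightarrow> (\<exists>i. w i = c \<and> prefix_inf u (suffix (Suc i) w))"
  by (simp add: factor_iff_prefix_inf_suffix prefix_inf_Cons)

lemma left_special_ab_iff:
  "left_special u (w :: ab infword) \<longleftrightarrow> factor (A # u) w \<and> factor (B # u) w"
proof
  assume "left_special u w"
  then obtain x y where "x \<noteq> y" "factor (x # u) w" "factor (y # u) w"
    unfolding left_special_def by blast
  then show "factor (A # u) w \<and> factor (B # u) w" by (cases x; cases y) auto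
qed (auto simp: left_special_def)

lemma prefix_inf_map_comp:
  assumes "inj h"
  shows "prefix_inf (map h u) (h \<circ> w) \<longleftrightarrow> prefix_inf u w"
  using assms by (simp add: prefix_inf_nth inj_eq)

lemma factor_map_comp:
  assumes "inj h"
  shows "factor (map h u) (h \<circ> w) \<longleftrightarrow> factor u w"
proof -
  have "suffix i (h \<circ> w) = h \<circ> suffix i w" for i by (rule ext) simp
  then show ?thesis using assms by (simp add: factor_iff_prefix_inf_suffix prefix_inf_map_comp)
qed

lemma left_special_map_comp:
  assumes "inj h"
  shows "left_special (map h u) (h \<circ> w) \<longleftrightarrow> left_special u w"
proof
  assume "left_special (map h u) (h \<circ> w)"
  then obtain x y where xy: "x \<noteq> y" "factor (x # map h u) (h \<circ> w)" "factor (y # map h u) (h \<circ> w)"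
    unfolding left_special_def by blast
  then obtain x' y' where "x = h x'" "y = h y'" by (auto simp: factor_Cons)
  with xy assms show "left_special u w"
    unfolding left_special_def by (metis factor_map_comp list.simps(9))
next
  assume "left_special u w"
  with assms show "left_special (map h u) (h \<circ> w)"
    unfolding left_special_def by (metis factor_map_comp inj_eq list.simps(9))
qed

lemma LSP_comp:
  assumes "bij h"
  shows "LSP (h \<circ> w) \<longleftrightarrow> LSP w"
proof -
  have inj: "inj h" using assms by (rule bij_is_inj)
  have "\<forall>u. left_special u w \<longrightarrow> prefix_inf u w"
    if "\<forall>u. left_special u (h \<circ> w) \<longrightarrow> prefix_inf u (h \<circ> w)"
    using that by (metis inj left_special_map_comp prefix_inf_map_comp)
  moreover have "\<forall>u. left_special u (h \<circ> w) \<longrightarrow> prefix_inf u (h \<circ> w)"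
    if "\<forall>u. left_special u w \<longrightarrow> prefix_inf u w"
  proof (intro allI impI)
    fix u
    have u: "u = map h (map (inv h) u)" using assms by (simp add: bij_is_surj surj_f_inv_f map_idI)
    assume "left_special u (h \<circ> w)"
    with that show "prefix_inf u (h \<circ> w)"
      by (metis u inj left_special_map_comp prefix_inf_map_comp)
  qed
  ultimately show ?thesis unfolding LSP_def by blast
qed

section \<open>Images under nonerasing morphisms\<close>

lemma morph_list_Nil [simp]: "morph_list f [] = []"
  by (simp add: morph_list_def)

lemma morph_list_Cons [simp]: "morph_list f (c # u) = f c @ morph_list f u"
  by (simp add: morph_list_def)

lemma morph_list_append [simp]: "morph_list f (u @ v) = morph_list f u @ morph_list f v"
  by (simp add: morph_list_def)

definition nonerasing :: "('a \<Rightarrow> 'b list) \<Rightarrow> bool" where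
  "nonerasing f \<longleftrightarrow> (\<forall>c. f c \<noteq> [])"

lemma length_le_length_morph_list:
  assumes "nonerasing f"
  shows "length u \<le> length (morph_list f u)"
proof (induction u)
  case (Cons c u)
  obtain x xs where "f c = x # xs" using assms by (cases "f c") (auto simp: nonerasing_def)
  with Cons.IH show ?case by simp
qed simp

lemma morph_list_prefix_mono:
  assumes "m \<le> m'"
  shows "\<exists>zs. morph_list f (prefix m' w) = morph_list f (prefix m w) @ zs"
proof -
  obtain d where "m' = m + d" using assms le_Suc_ex by blast
  then show ?thesis by (simp only: subsequence_append morph_list_append) blast
qed

lemma morph_inf_nth_morph_list_prefix:
  assumes f: "nonerasing f" and k: "k < length (morph_list f (prefix n w))"
  shows "morph_inf f w k = morph_list f (prefix n w) ! k"
proof -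
  let ?P = "\<lambda>m. morph_list f (prefix m w)" and ?N = "max n (Suc k)"
  have k': "k < length (?P (Suc k))"
    using length_le_length_morph_list[OF f, of "prefix (Suc k) w"] by simp
  obtain zs where zs: "?P ?N = ?P (Suc k) @ zs"
    using morph_list_prefix_mono[where m = "Suc k" and m' = ?N] by auto
  obtain zs' where zs': "?P ?N = ?P n @ zs'"
    using morph_list_prefix_mono[where m = n and m' = ?N] by auto
  have "morph_inf f w k = ?P (Suc k) ! k" by (simp only: morph_inf_def subsequence_def)
  also have "\<dots> = ?P ?N ! k" by (simp only: zs nth_append_left[OF k'])
  also have "\<dots> = ?P n ! k" by (simp only: zs' nth_append_left[OF k])
  finally show ?thesis .
qed

lemma morph_inf_conc:
  assumes f: "nonerasing f"
  shows "morph_inf f (u \<frown> w) = morph_list f u \<frown> morph_inf f w"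
proof
  fix k
  let ?U = "morph_list f u" and ?P = "morph_list f (prefix (Suc k) w)"
  have P: "Suc k \<le> length ?P"
    using length_le_length_morph_list[OF f, of "prefix (Suc k) w"] by simp
  have pre: "morph_list f (prefix (length u + Suc k) (u \<frown> w)) = ?U @ ?P"
    by (simp del: subseq_to_Suc)
  have "k < length (?U @ ?P)" using P by simp
  then have uw: "morph_inf f (u \<frown> w) k = (?U @ ?P) ! k"
    using morph_inf_nth_morph_list_prefix[OF f, where n = "length u + Suc k"] by (simp only: pre)
  show "morph_inf f (u \<frown> w) k = (?U \<frown> morph_inf f w) k"
  proof (cases "k < length ?U")
    case False
    then have "k - length ?U < length ?P" using P by linarith
    then show ?thesis
      using False
      by (simp add: uw nth_append_right morph_inf_nth_morph_list_prefix[OF f] del: subseq_to_Suc)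
  qed (simp add: uw nth_append_left)
qed

lemma morph_inf_build: "nonerasing f \<Longrightarrow> morph_inf f (c ## w) = f c \<frown> morph_inf f w"
  using morph_inf_conc[of f "[c]" w] by simp

lemma morph_inf_conjugate:
  assumes "nonerasing f"
  shows "morph_inf (\<lambda>c. map h (f (g c))) w = h \<circ> morph_inf f (g \<circ> w)"
proof
  fix k
  have "morph_list (\<lambda>c. map h (f (g c))) u = map h (morph_list f (map g u))" for u
    by (simp add: morph_list_def map_concat comp_def)
  moreover have "k < length (morph_list f (map (g \<circ> w) [0..<Suc k]))"
    using length_le_length_morph_list[OF assms, of "map (g \<circ> w) [0..<Suc k]"] by simp
  ultimately show "morph_inf (\<lambda>c. map h (f (g c))) w k = (h \<circ> morph_inf f (g \<circ> w)) k"
    by (simp add: morph_inf_def del: upt_Suc)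
qed

definition block_start :: "('a \<Rightarrow> 'b list) \<Rightarrow> 'a infword \<Rightarrow> nat \<Rightarrow> nat" where
  "block_start f w n = length (morph_list f (prefix n w))"

lemma block_start_0 [simp]: "block_start f w 0 = 0"
  by (simp add: block_start_def)

lemma block_start_Suc: "block_start f w (Suc n) = block_start f w n + length (f (w n))"
  by (simp add: block_start_def)

lemma block_start_less_Suc: "nonerasing f \<Longrightarrow> block_start f w n < block_start f w (Suc n)"
  by (simp add: block_start_Suc nonerasing_def)

lemma suffix_block_start_morph_inf:
  assumes "nonerasing f"
  shows "suffix (block_start f w n) (morph_inf f w) = morph_inf f (suffix n w)"
proof -
  have "morph_inf f w = morph_list f (prefix n w) \<frown> morph_inf f (suffix n w)"
    using morph_inf_conc[OF assms] prefix_suffix by metis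
  then show ?thesis unfolding block_start_def by (metis suffix_conc_length)
qed

lemma morph_inf_block_start_add:
  assumes "nonerasing f" and "j < length (f (w n))"
  shows "morph_inf f w (block_start f w n + j) = f (w n) ! j"
proof -
  have "morph_inf f w (block_start f w n + j) = morph_inf f (w n ## suffix (Suc n) w) j"
    using suffix_block_start_morph_inf[OF assms(1), of w n]
    by (metis suffix_nth suffix_singleton_suffix)
  also have "\<dots> = f (w n) ! j" by (simp only: morph_inf_build[OF assms(1)] conc_fst[OF assms(2)])
  finally show ?thesis .
qed

lemma block_cases:
  assumes "nonerasing f"
  obtains n where "block_start f w n \<le> i" and "i < block_start f w (Suc n)"
proof (induction i arbitrary: thesis)
  case 0
  then show ?case using block_start_less_Suc[OF assms, of w 0] by (metis block_start_0 order_refl)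
next
  case (Suc i)
  then obtain n where n: "block_start f w n \<le> i" "i < block_start f w (Suc n)" by blast
  show ?case
  proof (cases "Suc i < block_start f w (Suc n)")
    case True
    with n show ?thesis by (intro Suc.prems[of n]) simp_all
  next
    case False
    with n block_start_less_Suc[OF assms, of w "Suc n"] show ?thesis
      by (intro Suc.prems[of "Suc n"]) simp_all
  qed
qed

section \<open>Desubstitution of left special factors\<close>

text \<open>The strict decrease of length is what allows induction along an infinite directive sequence.\<close>

definition ls_desubstitutive :: "('a \<Rightarrow> 'a list) \<Rightarrow> bool" where
  "ls_desubstitutive f \<longleftrightarrow> (\<forall>w u. left_special u (morph_inf f w) \<and> u \<noteq> [] \<longrightarrow>
     (\<exists>v. length v < length u \<and> left_special v w \<and> (prefix_inf v w \<longrightarrow> prefix_inf u (morph_inf f w))))"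

lemma LSP_morph_inf:
  assumes f: "ls_desubstitutive f" and w: "LSP w"
  shows "LSP (morph_inf f w)"
  unfolding LSP_def
proof (intro allI impI)
  fix u
  assume ls: "left_special u (morph_inf f w)"
  show "prefix_inf u (morph_inf f w)"
  proof (cases "u = []")
    case False
    with f ls obtain v where "left_special v w" "prefix_inf v w \<longrightarrow> prefix_inf u (morph_inf f w)"
      unfolding ls_desubstitutive_def by blast
    with w show ?thesis by (simp add: LSP_def)
  qed simp
qed

lemma S_adic_imp_LSP:
  assumes S: "\<forall>f\<in>S. ls_desubstitutive f" and "S_adic S w"
  shows "LSP w"
proof -
  obtain fs ws where fs: "\<forall>n\<ge>1. fs n \<in> S" and w: "ws 1 = w"
    and ws: "\<forall>n\<ge>1. ws n = morph_inf (fs n) (ws (Suc n))"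
    using \<open>S_adic S w\<close> unfolding S_adic_def by blast
  have "prefix_inf u (ws n)" if "n \<ge> 1" and "left_special u (ws n)" for u n
    using that
  proof (induction "length u" arbitrary: u n rule: less_induct)
    case less
    show ?case
    proof (cases "u = []")
      case False
      have desubst: "ls_desubstitutive (fs n)" using S fs less.prems(1) by blast
      have ws_n: "ws n = morph_inf (fs n) (ws (Suc n))" using ws less.prems(1) by blast
      obtain v where "length v < length u" "left_special v (ws (Suc n))"
          "prefix_inf v (ws (Suc n)) \<longrightarrow> prefix_inf u (ws n)"
        using desubst less.prems(2) False unfolding ws_n ls_desubstitutive_def by blast
      with less.hyps show ?thesis by simp
    qed simp
  qed
  with w show ?thesis unfolding LSP_def by blast
qed

lemma S_adic_coinduct:
  assumes step: "\<And>w. P w \<Longrightarrow> \<exists>f W. f \<in> S \<and> w = morph_inf f W \<and> P W" and "P w"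
  shows "S_adic S w"
proof -
  define pre where "pre x = (SOME q. fst q \<in> S \<and> x = morph_inf (fst q) (snd q) \<and> P (snd q))" for x
  have pre: "fst (pre x) \<in> S \<and> x = morph_inf (fst (pre x)) (snd (pre x)) \<and> P (snd (pre x))"
    if "P x" for x
  proof -
    have "\<exists>q. fst q \<in> S \<and> x = morph_inf (fst q) (snd q) \<and> P (snd q)" using step[OF that] by auto
    then show ?thesis unfolding pre_def by (rule someI_ex)
  qed
  define ws where "ws n = ((snd \<circ> pre) ^^ n) w" for n
  have ws_Suc: "ws (Suc n) = snd (pre (ws n))" for n by (simp add: ws_def)
  have P_ws: "P (ws n)" for n
  proof (induction n)
    case 0
    show ?case using \<open>P w\<close> by (simp add: ws_def)
  next
    case (Suc n)
    show ?case using pre[OF Suc.IH] by (simp add: ws_Suc)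
  qed
  text \<open>The directive sequence in \<open>S_adic\<close> is indexed from \<open>1\<close>.\<close>
  show ?thesis unfolding S_adic_def
  proof (intro exI[of _ "\<lambda>n. fst (pre (ws (n - 1)))"] exI[of _ "\<lambda>n. ws (n - 1)"] conjI allI impI)
    fix n :: nat
    assume "n \<ge> 1"
    then obtain m where n: "n = Suc m" by (cases n) auto
    show "fst (pre (ws (n - 1))) \<in> S" using pre[OF P_ws] by blast
    show "ws (n - 1) = morph_inf (fst (pre (ws (n - 1)))) (ws (Suc n - 1))"
      using pre[OF P_ws, of m] by (simp add: n ws_Suc)
  qed (simp add: ws_def)
qed

lemma ls_desubstitutive_conjugate:
  assumes hg: "h \<circ> g = id" and gh: "g \<circ> h = id"
    and f: "nonerasing f" "ls_desubstitutive f"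
  shows "ls_desubstitutive (\<lambda>c. map h (f (g c)))"
  unfolding ls_desubstitutive_def
proof (intro allI impI, elim conjE)
  fix w u
  assume ls: "left_special u (morph_inf (\<lambda>c. map h (f (g c))) w)" and "u \<noteq> []"
  have inj: "inj h" using gh by (metis inj_on_id inj_on_imageI2)
  have w: "w = h \<circ> (g \<circ> w)" by (simp only: comp_assoc[symmetric] hg id_comp)
  have u: "u = map h (map g u)" by (simp only: map_map hg list.map_id)
  note image = morph_inf_conjugate[OF f(1), of h g w]
  have "left_special (map g u) (morph_inf f (g \<circ> w))"
    using ls left_special_map_comp[OF inj, of "map g u"] by (simp only: image flip: u)
  with f(2) \<open>u \<noteq> []\<close> obtain v where v: "length v < length (map g u)" "left_special v (g \<circ> w)"
      "prefix_inf v (g \<circ> w) \<longrightarrow> prefix_inf (map g u) (morph_inf f (g \<circ> w))"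
    unfolding ls_desubstitutive_def by blast
  show "\<exists>v. length v < length u \<and> left_special v w \<and>
      (prefix_inf v w \<longrightarrow> prefix_inf u (morph_inf (\<lambda>c. map h (f (g c))) w))"
  proof (intro exI conjI)
    show "length (map h v) < length u" using v(1) by simp
    show "left_special (map h v) w" using v(2) inj w left_special_map_comp by metis
    show "prefix_inf (map h v) w \<longrightarrow> prefix_inf u (morph_inf (\<lambda>c. map h (f (g c))) w)"
      using v(3) inj w u image prefix_inf_map_comp by metis
  qed
qed

section \<open>The morphism \<open>\<tau>\<^sub>a\<close>\<close>

lemma tau_a_simps [simp]: "tau_a A = [A]" "tau_a B = [A, B]"
  by (simp_all add: tau_a_def)

lemma nonerasing_tau_a: "nonerasing tau_a"
  by (simp add: nonerasing_def tau_a_def split: ab.split)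

lemma morph_inf_tau_a_build [simp]: "morph_inf tau_a (c ## w) = tau_a c \<frown> morph_inf tau_a w"
  by (rule morph_inf_build[OF nonerasing_tau_a])

lemma morph_inf_tau_a_0: "morph_inf tau_a w 0 = A"
  by (subst build_split) (cases "w 0"; simp)

lemma morph_inf_tau_a_block_start: "morph_inf tau_a w (block_start tau_a w n) = A"
  using morph_inf_block_start_add[OF nonerasing_tau_a, of 0 w n] by (cases "w n") simp_all

lemma morph_inf_tau_a_block_last: "morph_inf tau_a w (block_start tau_a w (Suc n) - 1) = w n"
proof (cases "w n")
  case A
  then show ?thesis
    using morph_inf_block_start_add[OF nonerasing_tau_a, of 0 w n] by (simp add: block_start_Suc)
next
  case B
  then show ?thesis
    using morph_inf_block_start_add[OF nonerasing_tau_a, of 1 w n] by (simp add: block_start_Suc)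
qed

lemma morph_inf_tau_a_A_block_start:
  assumes "morph_inf tau_a w i = A"
  obtains n where "i = block_start tau_a w n"
proof -
  obtain n where n: "block_start tau_a w n \<le> i" "i < block_start tau_a w (Suc n)"
    using block_cases[OF nonerasing_tau_a] by blast
  then consider "i = block_start tau_a w n" | "w n = B" "i = block_start tau_a w n + 1"
    by (cases "w n") (auto simp: block_start_Suc le_less less_Suc_eq)
  then show ?thesis
    using that assms morph_inf_block_start_add[OF nonerasing_tau_a, of 1 w n] by cases auto
qed

lemma morph_inf_tau_a_Suc_after_B:
  assumes "morph_inf tau_a w i = B"
  shows "morph_inf tau_a w (Suc i) = A"
proof -
  obtain n where n: "block_start tau_a w n \<le> i" "i < block_start tau_a w (Suc n)"
    using block_cases[OF nonerasing_tau_a] by blast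
  have "i \<noteq> block_start tau_a w n" using assms morph_inf_tau_a_block_start by force
  with n have "Suc i = block_start tau_a w (Suc n)"
    by (cases "w n") (auto simp: block_start_Suc)
  then show ?thesis by (simp add: morph_inf_tau_a_block_start)
qed

lemma factor_Cons_A_morph_inf_tau_a:
  assumes "factor (c # A # u) (morph_inf tau_a w)"
  obtains n where "w n = c" and "prefix_inf (A # u) (morph_inf tau_a (suffix (Suc n) w))"
proof -
  obtain i where i: "morph_inf tau_a w i = c" "prefix_inf (A # u) (suffix (Suc i) (morph_inf tau_a w))"
    using assms by (auto simp: factor_Cons)
  then have "morph_inf tau_a w (Suc i) = A" by (simp add: prefix_inf_Cons)
  then obtain m where m: "Suc i = block_start tau_a w m" by (rule morph_inf_tau_a_A_block_start)
  then obtain n where n: "m = Suc n" by (cases m) auto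
  show ?thesis
  proof
    show "w n = c" by (metis i(1) m n morph_inf_tau_a_block_last diff_Suc_1)
    show "prefix_inf (A # u) (morph_inf tau_a (suffix (Suc n) w))"
      using i(2) m n suffix_block_start_morph_inf[OF nonerasing_tau_a] by metis
  qed
qed

lemma prefix_inf_morph_list_tau_a_append_A:
  assumes "prefix_inf v w"
  shows "prefix_inf (morph_list tau_a v @ [A]) (morph_inf tau_a w)"
proof -
  have "morph_inf tau_a w = morph_list tau_a v \<frown> morph_inf tau_a (suffix (length v) w)"
    using assms morph_inf_conc[OF nonerasing_tau_a] by (metis prefix_inf_iff_conc)
  then show ?thesis by (simp add: prefix_inf_Cons morph_inf_tau_a_0)
qed

lemma factor_Cons_morph_inf_tau_a:
  assumes "factor (c # v) w"
  shows "factor (c # morph_list tau_a v @ [A]) (morph_inf tau_a w)"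
proof -
  obtain n where n: "w n = c" "prefix_inf v (suffix (Suc n) w)"
    using assms by (auto simp: factor_Cons)
  let ?i = "block_start tau_a w (Suc n) - 1"
  have Suc_i: "Suc ?i = block_start tau_a w (Suc n)"
    using block_start_less_Suc[OF nonerasing_tau_a, of w n] by simp
  have "morph_inf tau_a w ?i = c" using n(1) morph_inf_tau_a_block_last[of w n] by simp
  moreover have "prefix_inf (morph_list tau_a v @ [A]) (suffix (Suc ?i) (morph_inf tau_a w))"
    using prefix_inf_morph_list_tau_a_append_A[OF n(2)]
    by (simp only: Suc_i suffix_block_start_morph_inf[OF nonerasing_tau_a])
  ultimately show ?thesis unfolding factor_Cons by blast
qed

text \<open>In a decomposition \<open>u = \<tau>\<^sub>a(v) r\<close> a trailing \<open>A\<close> of \<open>u\<close> always goes into \<open>r\<close>; this makes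
 \<open>v\<close> a prefix of \<open>w\<close> whenever \<open>u\<close> is a prefix of \<open>\<tau>\<^sub>a(w)\<close>.\<close>

definition tau_a_parse :: "ab list \<Rightarrow> ab list \<Rightarrow> bool" where
  "tau_a_parse v r \<longleftrightarrow> r = [A] \<or> r = [] \<and> (v = [] \<or> last v = B)"

lemma length_less_tau_a_parse:
  assumes "tau_a_parse v r" and "morph_list tau_a v @ r \<noteq> []"
  shows "length v < length (morph_list tau_a v @ r)"
proof -
  have le: "length u \<le> length (morph_list tau_a u)" for u
    by (rule length_le_length_morph_list[OF nonerasing_tau_a])
  show ?thesis
  proof (cases "r = []")
    case True
    with assms have "v \<noteq> []" "last v = B" by (auto simp: tau_a_parse_def)
    then have "v = butlast v @ [B]" by (metis append_butlast_last_id)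
    then have "morph_list tau_a v = morph_list tau_a (butlast v) @ [A, B]"
      by (metis morph_list_append morph_list_Cons morph_list_Nil tau_a_simps(2) append_Nil2)
    then show ?thesis using True le[of "butlast v"] by simp
  next
    case False
    with assms le[of v] show ?thesis by (auto simp: tau_a_parse_def)
  qed
qed

lemma exists_tau_a_parse:
  assumes "prefix_inf u (morph_inf tau_a w)"
  shows "\<exists>v r. u = morph_list tau_a v @ r \<and> tau_a_parse v r"
  using assms
proof (induction "length u" arbitrary: u w rule: less_induct)
  case less
  have w: "morph_inf tau_a w = tau_a (w 0) \<frown> morph_inf tau_a (suffix 1 w)"
    using morph_inf_tau_a_build[of "w 0" "suffix 1 w"] by simp
  consider "u = [] \<or> u = [A]" | u' where "u = tau_a (w 0) @ u'" "u' \<noteq> [] \<or> w 0 = B"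
  proof (cases u)
    case (Cons x u1)
    show ?thesis
    proof (cases u1)
      case Nil
      then show ?thesis using Cons less.prems w that(1) by (cases "w 0") auto
    next
      case (Cons y u2)
      then show ?thesis using \<open>u = x # u1\<close> less.prems w that(2) by (cases "w 0") auto
    qed
  qed (use that in simp)
  then show ?case
  proof cases
    case 1
    then show ?thesis by (metis append_Nil morph_list_Nil tau_a_parse_def)
  next
    case (2 u')
    have "prefix_inf u' (morph_inf tau_a (suffix 1 w))" using less.prems 2(1) w by simp
    moreover have "length u' < length u" using 2(1) by (cases "w 0") simp_all
    ultimately obtain v r where "u' = morph_list tau_a v @ r" "tau_a_parse v r"
      using less.hyps by blast
    with 2 show ?thesis
      by (intro exI[of _ "w 0 # v"] exI[of _ r]) (auto simp: tau_a_parse_def)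
  qed
qed

lemma prefix_inf_tau_a_parse_iff:
  assumes "tau_a_parse v r"
  shows "prefix_inf (morph_list tau_a v @ r) (morph_inf tau_a w) \<longleftrightarrow> prefix_inf v w"
proof
  show "prefix_inf v w" if "prefix_inf (morph_list tau_a v @ r) (morph_inf tau_a w)"
    using that assms
  proof (induction v arbitrary: w)
    case (Cons c v)
    let ?x = "morph_list tau_a v @ r"
    have parse: "tau_a_parse v r"
      using Cons.prems(2) by (auto simp: tau_a_parse_def split: if_splits)
    have x: "\<exists>x'. ?x = A # x'" if "c = A"
    proof (cases v)
      case Nil
      then show ?thesis using Cons.prems(2) that by (auto simp: tau_a_parse_def)
    next
      case (Cons d v')
      then show ?thesis by (cases d) auto
    qed
    have w: "morph_inf tau_a w = tau_a (w 0) \<frown> morph_inf tau_a (suffix 1 w)"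
      using morph_inf_tau_a_build[of "w 0" "suffix 1 w"] by simp
    have "w 0 = c"
      using Cons.prems(1) x morph_inf_tau_a_0 unfolding w
      by (cases c; cases "w 0") (auto simp: prefix_inf_Cons)
    then have "prefix_inf ?x (morph_inf tau_a (suffix 1 w))" using Cons.prems(1) w by simp
    then have "prefix_inf v (suffix 1 w)" using Cons.IH parse by blast
    with \<open>w 0 = c\<close> show ?case by (simp add: prefix_inf_Cons)
  qed simp
next
  assume "prefix_inf v w"
  then have "prefix_inf (morph_list tau_a v @ [A]) (morph_inf tau_a w)"
    by (rule prefix_inf_morph_list_tau_a_append_A)
  with assms show "prefix_inf (morph_list tau_a v @ r) (morph_inf tau_a w)"
    by (auto simp: tau_a_parse_def prefix_inf_append)
qed

lemma left_special_morph_inf_tau_a_desubst: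
  assumes ls: "left_special u (morph_inf tau_a w)" and "u \<noteq> []"
  obtains v where "length v < length u" and "left_special v w"
    and "prefix_inf v w \<longrightarrow> prefix_inf u (morph_inf tau_a w)"
proof -
  obtain i where "morph_inf tau_a w i = B" "prefix_inf u (suffix (Suc i) (morph_inf tau_a w))"
    using ls by (auto simp: left_special_ab_iff factor_Cons)
  with \<open>u \<noteq> []\<close> obtain u' where u: "u = A # u'"
    using morph_inf_tau_a_Suc_after_B by (cases u) (auto simp: prefix_inf_Cons)
  obtain n where n: "w n = B" "prefix_inf u (morph_inf tau_a (suffix (Suc n) w))"
    using ls u factor_Cons_A_morph_inf_tau_a by (metis left_special_ab_iff)
  obtain m where m: "w m = A" "prefix_inf u (morph_inf tau_a (suffix (Suc m) w))"
    using ls u factor_Cons_A_morph_inf_tau_a by (metis left_special_ab_iff)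
  obtain v r where vr: "u = morph_list tau_a v @ r" "tau_a_parse v r"
    using exists_tau_a_parse[OF n(2)] by blast
  note parse_iff = prefix_inf_tau_a_parse_iff[OF vr(2)]
  show ?thesis
  proof
    show "length v < length u" using length_less_tau_a_parse vr \<open>u \<noteq> []\<close> by blast
    show "left_special v w"
      using n m unfolding left_special_ab_iff factor_Cons vr(1) parse_iff by blast
    show "prefix_inf v w \<longrightarrow> prefix_inf u (morph_inf tau_a w)"
      using vr(1) parse_iff by blast
  qed
qed

lemma ls_desubstitutive_tau_a: "ls_desubstitutive tau_a"
  unfolding ls_desubstitutive_def by (metis left_special_morph_inf_tau_a_desubst)

lemma LSP_A_no_BB:
  assumes "LSP w" and "w 0 = A" and "w i = B"
  shows "w (Suc i) = A"
proof (rule ccontr)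
  assume "w (Suc i) \<noteq> A"
  then have "w (Suc i) = B" by (cases "w (Suc i)") auto
  have "\<exists>k. w k = A \<and> w (Suc k) = B"
    using assms(2,3)
  proof (induction i)
    case (Suc i)
    then show ?case by (cases "w i") auto
  qed simp
  then obtain k where "w k = A" "w (Suc k) = B" by blast
  with \<open>w (Suc i) = B\<close> assms(3) have "left_special [B] w"
    by (auto simp: left_special_ab_iff factor_Cons prefix_inf_Cons)
  with assms(1,2) show False by (auto simp: LSP_def prefix_inf_Cons)
qed

text \<open>Block \<open>n\<close> of \<open>w\<close> starts at position \<open>p n\<close> with \<open>A\<close>; the letter after it is \<open>B\<close>
 exactly when the block is \<open>AB\<close>, which is what \<open>W n\<close> records.\<close>

lemma morph_inf_tau_a_surj:
  assumes A: "w 0 = A" and no_BB: "\<And>i. w i = B \<Longrightarrow> w (Suc i) = A"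
  obtains W where "w = morph_inf tau_a W"
proof -
  define next_block where "next_block i = (if w (Suc i) = B then Suc (Suc i) else Suc i)" for i
  define p where "p n = (next_block ^^ n) 0" for n
  define W where "W n = w (Suc (p n))" for n
  have p_Suc: "p (Suc n) = next_block (p n)" for n by (simp add: p_def)
  have p_A: "w (p n) = A" for n
  proof (induction n)
    case (Suc n)
    then show ?case using no_BB[of "Suc (p n)"]
      by (cases "w (Suc (p n))") (auto simp: p_Suc next_block_def)
  qed (simp add: p_def A)
  have image: "morph_list tau_a (prefix n W) = prefix (p n) w" for n
  proof (induction n)
    case (Suc n)
    with p_A[of n] show ?case
      by (cases "w (Suc (p n))") (simp_all add: p_Suc next_block_def W_def)
  qed (simp add: p_def)
  have p_ge: "n \<le> p n" for n
    by (induction n) (auto simp: p_Suc next_block_def)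
  have "morph_inf tau_a W k = prefix (p (Suc k)) w ! k" for k
    by (simp only: morph_inf_def subsequence_def[symmetric] image)
  also have "\<dots> k = w k" for k
    using p_ge[of "Suc k"] by (simp del: subseq_to_Suc)
  finally have "w = morph_inf tau_a W" by (simp add: fun_eq_iff)
  then show ?thesis by (rule that)
qed

lemma LSP_morph_inf_tau_a_imp_LSP:
  assumes "LSP (morph_inf tau_a w)"
  shows "LSP w"
  unfolding LSP_def
proof (intro allI impI)
  fix v
  assume "left_special v w"
  then have "left_special (morph_list tau_a v @ [A]) (morph_inf tau_a w)"
    by (simp add: left_special_ab_iff factor_Cons_morph_inf_tau_a)
  with assms have "prefix_inf (morph_list tau_a v @ [A]) (morph_inf tau_a w)"
    by (simp add: LSP_def)
  then show "prefix_inf v w"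
    by (simp add: prefix_inf_tau_a_parse_iff tau_a_parse_def)
qed

lemma LSP_A_imp_morph_inf_tau_a:
  assumes "LSP w" and "w 0 = A"
  obtains W where "w = morph_inf tau_a W" and "LSP W"
proof -
  obtain W where "w = morph_inf tau_a W"
    using morph_inf_tau_a_surj LSP_A_no_BB[OF assms] assms(2) by metis
  with assms(1) LSP_morph_inf_tau_a_imp_LSP show ?thesis using that by blast
qed

section \<open>Exchanging the letters\<close>

fun exch :: "ab \<Rightarrow> ab" where
  "exch A = B"
| "exch B = A"

lemma exch_comp_exch: "exch \<circ> exch = id"
proof
  show "(exch \<circ> exch) c = id c" for c by (cases c) simp_all
qed

lemma tau_b_conjugate: "tau_b = (\<lambda>c. map exch (tau_a (exch c)))"
proof
  show "tau_b c = map exch (tau_a (exch c))" for c by (cases c) (simp_all add: tau_b_def)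
qed

lemma ls_desubstitutive_tau_b: "ls_desubstitutive tau_b"
  unfolding tau_b_conjugate
  by (rule ls_desubstitutive_conjugate[OF exch_comp_exch exch_comp_exch
        nonerasing_tau_a ls_desubstitutive_tau_a])

lemma LSP_desubstitute:
  assumes "LSP w"
  shows "\<exists>f W. f \<in> {tau_a, tau_b} \<and> w = morph_inf f W \<and> LSP W"
proof (cases "w 0")
  case A
  with assms show ?thesis by (metis LSP_A_imp_morph_inf_tau_a insertI1)
next
  case B
  have bij: "bij exch" using exch_comp_exch by (metis o_bij)
  have "LSP (exch \<circ> w)" using assms LSP_comp[OF bij] by blast
  moreover have "(exch \<circ> w) 0 = A" using B by simp
  ultimately obtain W where W: "exch \<circ> w = morph_inf tau_a W" "LSP W"
    by (rule LSP_A_imp_morph_inf_tau_a)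
  have "w = exch \<circ> morph_inf tau_a (exch \<circ> (exch \<circ> W))"
    using W(1) exch_comp_exch by (metis comp_assoc id_comp)
  then have "w = morph_inf tau_b (exch \<circ> W)"
    by (simp only: tau_b_conjugate morph_inf_conjugate[OF nonerasing_tau_a])
  moreover have "LSP (exch \<circ> W)" using W(2) LSP_comp[OF bij] by blast
  ultimately show ?thesis by blast
qed

theorem proposition2:
  shows "(\<forall>(w :: ab infword) f. LSP w \<and> f \<in> {tau_a, tau_b} \<longrightarrow> LSP (morph_inf f w))
       \<and> (\<forall>w :: ab infword. LSP w \<longleftrightarrow> S_adic {tau_a, tau_b} w)"
proof -
  have desubst: "\<forall>f\<in>{tau_a, tau_b}. ls_desubstitutive f"
    using ls_desubstitutive_tau_a ls_desubstitutive_tau_b by blast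
  have "S_adic {tau_a, tau_b} w" if "LSP w" for w :: "ab infword"
    using LSP_desubstitute that by (rule S_adic_coinduct)
  with desubst show ?thesis using LSP_morph_inf S_adic_imp_LSP by blast
qed

end
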